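(* Let $\mathcal{H}$ be a separable Hilbert space and $W$ a self-adjoint operator on $\mathcal{H}$ with $\ker(W)=\{0\}$, and let $(\mathcal{H}_W,[\cdot,\cdot])$ be the associated Krein space. (i) If $W$ is bounded and $0\in\mathrm{spec}(W)$, then no frame $\{f_n\}_{n\in\mathbb{N}}$ for the Hilbert space $(\mathcal{H},\langle\cdot,\cdot\rangle)$ is a frame for the Krein space $(\mathcal{H}_W,[\cdot,\cdot])$. (ii) If $W$ is unbounded, then no frame $\{f_n\}_{n\in\mathbb{N}}\subset\mathrm{dom}(W)$ for the Hilbert space $(\mathcal{H},\langle\cdot,\cdot\rangle)$ is a frame for the Krein space $(\mathcal{H}_W,[\cdot,\cdot])$.
   Context: Let $W$ (possibly unbounded) be self-adjoint with domain $\mathrm{dom}(W)\subset\mathcal{H}$, $\ker W=\{0\}$, polar decomposition $W=J|W|$ ($J$ self-adjoint unitary, $J=E(0,\infty)-E(-\infty,0)$ for the spectral measure $E$ of $W$). On $\mathrm{dom}(W)$ define $[f,g]:=\langle f,Wg\rangle$ and $[f,g]_J:=\langle f,|W|g\rangle$, $\|f\|_J:=\sqrt{[f,g]_J}|_{g=f}$. $\mathcal{H}_W$ is the completion of $\mathrm{dom}(W)$ with respect to $\|\cdot\|_J$, with $[\cdot,\cdot]$, $[\cdot,\cdot]_J$ and $J$ extended by continuity; it is a Krein space with fundamental symmetry $J$ and associated Hilbert inner product $[\cdot,\cdot]_J$. A sequence $\{k_n\}\subset\mathcal{H}_W$ is a frame for the Krein space $\mathcal{H}_W$ if there are $0<A\le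 B<\infty$ with $A\|k\|_J^2\le\sum_n|[k_n,k]|^2\le B\|k\|_J^2$ for all $k\in\mathcal{H}_W$. A frame for the Hilbert space $\mathcal{H}$ is a sequence $\{f_n\}$ with $A\|f\|^2\le\sum_n|\langle f_n,f\rangle|^2\le B\|f\|^2$ for all $f\in\mathcal{H}$, some $0<A\le B<\infty$. (For bounded $W$, $\mathrm{dom}(W)=\mathcal{H}\subset\mathcal{H}_W$.) *)

theory Defs
  imports "HOL-Analysis.Analysis"
begin

text \<open>Inner product is conjugate-linear in the first and linear in the second argument.\<close>

class complex_inner_space = real_normed_vector +
  fixes scaleC :: "complex \<Rightarrow> 'a \<Rightarrow> 'a"
    and cinner :: "'a \<Rightarrow> 'a \<Rightarrow> complex"
  assumes scaleC_of_real: "scaleC (complex_of_real r) x = scaleR r x"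
    and scaleC_add_right: "scaleC a (x + y) = scaleC a x + scaleC a y"
    and scaleC_add_left: "scaleC (a + b) x = scaleC a x + scaleC b x"
    and scaleC_scaleC: "scaleC a (scaleC b x) = scaleC (a * b) x"
    and scaleC_one: "scaleC 1 x = x"
    and cinner_commute: "cinner x y = cnj (cinner y x)"
    and cinner_add_right: "cinner x (y + z) = cinner x y + cinner x z"
    and cinner_scaleC_right: "cinner x (scaleC a y) = a * cinner x y"
    and norm_eq_sqrt_cinner: "norm x = sqrt (Re (cinner x x))"

definition csubspace :: "'a::complex_inner_space set \<Rightarrow> bool" where
  "csubspace D \<longleftrightarrow> 0 \<in> D \<and> (\<forall>x\<in>D. \<forall>y\<in>D. x + y \<in> D) \<and> (\<forall>a. \<forall>x\<in>D. scaleC a x \<in> D)"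

text \<open>Linear operator with domain D (values of W outside D are irrelevant).\<close>
definition linear_on :: "'a::complex_inner_space set \<Rightarrow> ('a \<Rightarrow> 'a) \<Rightarrow> bool" where
  "linear_on D W \<longleftrightarrow> csubspace D \<and>
     (\<forall>x\<in>D. \<forall>y\<in>D. W (x + y) = W x + W y) \<and> (\<forall>a. \<forall>x\<in>D. W (scaleC a x) = scaleC a (W x))"

text \<open>Self-adjoint (possibly unbounded) operator: densely defined, symmetric and W = W^*,
  i.e. dom(W^*) is contained in dom(W) and W^* agrees with W.\<close>
definition self_adjoint_op :: "'a::complex_inner_space set \<Rightarrow> ('a \<Rightarrow> 'a) \<Rightarrow> bool" where
  "self_adjoint_op D W \<longleftrightarrow> linear_on D W \<and> closure D = UNIV \<and>
     (\<forall>f\<in>D. \<forall>g\<in>D. cinner (W f) g = cinner f (W g)) \<and>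
     (\<forall>g h. (\<forall>f\<in>D. cinner (W f) g = cinner f h) \<longrightarrow> g \<in> D \<and> W g = h)"

definition bounded_op :: "'a::complex_inner_space set \<Rightarrow> ('a \<Rightarrow> 'a) \<Rightarrow> bool" where
  "bounded_op D W \<longleftrightarrow> (\<exists>C. \<forall>f\<in>D. norm (W f) \<le> C * norm f)"

definition op_spectrum :: "'a::complex_inner_space set \<Rightarrow> ('a \<Rightarrow> 'a) \<Rightarrow> complex set" where
  "op_spectrum D W = {z. \<not> (\<exists>R. (\<exists>C. \<forall>h. norm (R h) \<le> C * norm h) \<and>
       (\<forall>h. R h \<in> D \<and> W (R h) - scaleC z (R h) = h) \<and>
       (\<forall>f\<in>D. R (W f - scaleC z f) = f))}"

text \<open>J is the fundamental symmetry of the polar decomposition W = J|W|: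
  a bounded self-adjoint unitary (J^2 = I, J = J^*) leaving dom W invariant, commuting
  with W, and such that J W = |W| is nonnegative.  For ker W = 0 this J is unique and
  equals E(0,\<infinity>) - E(-\<infinity>,0).\<close>
definition polar_symmetry :: "'a::complex_inner_space set \<Rightarrow> ('a \<Rightarrow> 'a) \<Rightarrow> ('a \<Rightarrow> 'a) \<Rightarrow> bool" where
  "polar_symmetry D W J \<longleftrightarrow>
     linear_on UNIV J \<and>
     (\<forall>x y. cinner (J x) y = cinner x (J y)) \<and> (\<forall>x. J (J x) = x) \<and>
     (\<forall>f\<in>D. J f \<in> D \<and> J (W f) = W (J f)) \<and>
     (\<forall>f\<in>D. Im (cinner f (J (W f))) = 0 \<and> 0 \<le> Re (cinner f (J (W f))))"

definition hilbert_frame :: "(nat \<Rightarrow> 'a::complex_inner_space) \<Rightarrow> bool" where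
  "hilbert_frame fs \<longleftrightarrow> (\<exists>A B. 0 < A \<and> A \<le> B \<and> (\<forall>f.
      summable (\<lambda>n. (cmod (cinner (fs n) f))\<^sup>2) \<and>
      A * (norm f)\<^sup>2 \<le> (\<Sum>n. (cmod (cinner (fs n) f))\<^sup>2) \<and>
      (\<Sum>n. (cmod (cinner (fs n) f))\<^sup>2) \<le> B * (norm f)\<^sup>2))"

text \<open>Frame for the Krein space H_W, with the frame inequalities tested on the dense
  subspace dom W of H_W (equivalent to testing on all of H_W by continuity).
  Here [k_n,k] = <k_n, W k> and ||k||_J^2 = <k, |W| k> = <k, J W k>.\<close>
definition krein_frame :: "'a::complex_inner_space set \<Rightarrow> ('a \<Rightarrow> 'a) \<Rightarrow> ('a \<Rightarrow> 'a)
    \<Rightarrow> (nat \<Rightarrow> 'a) \<Rightarrow> bool" where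
  "krein_frame D W J ks \<longleftrightarrow> (\<exists>A B. 0 < A \<and> A \<le> B \<and> (\<forall>k\<in>D.
      summable (\<lambda>n. (cmod (cinner (ks n) (W k)))\<^sup>2) \<and>
      A * Re (cinner k (J (W k))) \<le> (\<Sum>n. (cmod (cinner (ks n) (W k)))\<^sup>2) \<and>
      (\<Sum>n. (cmod (cinner (ks n) (W k)))\<^sup>2) \<le> B * Re (cinner k (J (W k)))))"

end

theory Submission
  imports Defs
begin

text \<open>
  If \<open>{f\<^sub>n}\<close> were a frame for both spaces, then comparing the two frame inequalities at
  \<open>W k\<close> would give \<open>\<parallel>W k\<parallel>\<^sup>2 \<approx> \<langle>k, |W| k\<rangle>\<close> on \<open>dom W\<close>.  The upper estimate
  \<open>\<parallel>W k\<parallel>\<^sup>2 \<le> a \<langle>k, |W| k\<rangle> \<le> a \<parallel>k\<parallel> \<parallel>W k\<parallel>\<close> makes \<open>W\<close> bounded, which settles (ii).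
  For (i), a bounded self-adjoint \<open>W\<close> is everywhere defined, and the lower estimate says
  \<open>\<langle>x, T x\<rangle> \<le> c \<parallel>T x\<parallel>\<^sup>2\<close> for the positive injective operator \<open>T = |W|\<close>.  By Cauchy-Schwarz for the
  form of \<open>T\<close> this gives \<open>\<parallel>y\<parallel> \<le> c \<parallel>T y\<parallel>\<close> on the range of \<open>T\<close>, which is dense because
  \<open>T\<close> is injective and self-adjoint; so \<open>T\<close>, and with it \<open>W\<close>, is bounded below and onto,
  i.e. \<open>0\<close> lies in the resolvent set.
\<close>

lemma cinner_add_left: "cinner (x + y) z = cinner x z + cinner y (z::'a::complex_inner_space)"
  using cinner_commute[of "x + y" z] cinner_commute[of x z] cinner_commute[of y z]
  by (simp add: cinner_add_right)

lemma cinner_scaleC_left: "cinner (scaleC a x) (y::'a::complex_inner_space) = cnj a * cinner x y"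
  using cinner_commute[of "scaleC a x" y] cinner_commute[of x y] by (simp add: cinner_scaleC_right)

lemma cinner_scaleR_left: "cinner (scaleR r x) (y::'a::complex_inner_space) = scaleR r (cinner x y)"
  by (simp add: cinner_scaleC_left scaleR_conv_of_real flip: scaleC_of_real)

lemma cinner_scaleR_right: "cinner (x::'a::complex_inner_space) (scaleR r y) = scaleR r (cinner x y)"
  by (simp add: cinner_scaleC_right scaleR_conv_of_real flip: scaleC_of_real)

lemma Re_cinner_self: "Re (cinner x (x::'a::complex_inner_space)) = (norm x)\<^sup>2"
proof -
  have "0 \<le> Re (cinner x x)"
    using norm_eq_sqrt_cinner[of x] by (metis norm_ge_zero real_sqrt_ge_0_iff)
  then show ?thesis using norm_eq_sqrt_cinner[of x] by simp
qed

lemma cinner_self: "cinner x (x::'a::complex_inner_space) = of_real ((norm x)\<^sup>2)"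
proof (rule complex_eqI)
  have "Im (cinner x x) = Im (cnj (cinner x x))" using cinner_commute[of x x] by simp
  then show "Im (cinner x x) = Im (of_real ((norm x)\<^sup>2))" by simp
qed (simp add: Re_cinner_self)

lemma scaleC_zero_left: "scaleC 0 (x::'a::complex_inner_space) = 0"
  using scaleC_of_real[of 0 x] by simp

lemma quadratic_nonneg_imp_discriminant:
  fixes \<alpha> \<beta> \<gamma> :: real
  assumes nonneg: "\<And>t. 0 \<le> \<alpha> - 2 * t * \<beta> + t\<^sup>2 * \<beta> * \<gamma>" and "0 \<le> \<gamma>"
  shows "\<beta> \<le> \<alpha> * \<gamma>"
proof (cases "0 < \<beta>")
  case False
  moreover have "0 \<le> \<alpha>" using nonneg[of 0] by simp
  ultimately show ?thesis using \<open>0 \<le> \<gamma>\<close> by (simp add: not_less order_trans)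
next
  case \<beta>: True
  show ?thesis
  proof (cases "\<gamma> = 0")
    case True
    with nonneg[of 0] nonneg[of "(\<alpha> + 1) / \<beta>"] \<beta> show ?thesis by simp
  next
    case False
    with \<open>0 \<le> \<gamma>\<close> have "0 < \<gamma>" by simp
    have "0 \<le> \<alpha> - 2 * (1 / \<gamma>) * \<beta> + (1 / \<gamma>)\<^sup>2 * \<beta> * \<gamma>" by (rule nonneg)
    also have "\<dots> = \<alpha> - \<beta> / \<gamma>" using \<open>0 < \<gamma>\<close> by (simp add: power2_eq_square field_simps)
    finally show ?thesis using \<open>0 < \<gamma>\<close> by (simp add: field_simps)
  qed
qed

lemma hermitian_form_Cauchy_Schwarz:
  fixes B :: "'a::complex_inner_space \<Rightarrow> 'a \<Rightarrow> complex"
  assumes add: "\<And>x y z. B x (y + z) = B x y + B x z"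
    and scale: "\<And>x s y. B x (scaleC s y) = s * B x y"
    and hermitian: "\<And>x y. B x y = cnj (B y x)"
    and nonneg: "\<And>x. 0 \<le> Re (B x x)"
  shows "(cmod (B x y))\<^sup>2 \<le> Re (B x x) * Re (B y y)"
proof (rule quadratic_nonneg_imp_discriminant)
  have add_left: "B (u + v) z = B u z + B v z" for u v z
    using hermitian[of "u + v" z] hermitian[of u z] hermitian[of v z] by (simp add: add)
  have scale_left: "B (scaleC s u) z = cnj s * B u z" for s u z
    using hermitian[of "scaleC s u" z] hermitian[of u z] by (simp add: scale)
  let ?c = "B x y"
  have c_cnj: "?c * cnj ?c = of_real ((cmod ?c)\<^sup>2)" using complex_norm_square[of ?c] by simp
  fix t :: real
  \<comment> \<open>nonnegativity at \<open>x - t cnj (B x y) y\<close> is the quadratic inequality in \<open>t\<close>\<close>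
  define s where "s = - (of_real t * cnj ?c)"
  have "B (x + scaleC s y) (x + scaleC s y) = B x x + s * ?c + cnj s * cnj ?c + cnj s * s * B y y"
    using hermitian[of y x] by (simp add: add add_left scale scale_left algebra_simps)
  also have "\<dots> = B x x - 2 * of_real (t * (cmod ?c)\<^sup>2) + of_real (t\<^sup>2 * (cmod ?c)\<^sup>2) * B y y"
    unfolding s_def using c_cnj by (simp add: algebra_simps power2_eq_square)
  finally show "0 \<le> Re (B x x) - 2 * t * (cmod ?c)\<^sup>2 + t\<^sup>2 * (cmod ?c)\<^sup>2 * Re (B y y)"
    using nonneg[of "x + scaleC s y"] by simp
qed (rule nonneg)

lemma norm_cinner_le: "cmod (cinner x y) \<le> norm x * norm (y::'a::complex_inner_space)"
proof (rule power2_le_imp_le)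
  have "(cmod (cinner x y))\<^sup>2 \<le> Re (cinner x x) * Re (cinner y y)"
    by (rule hermitian_form_Cauchy_Schwarz)
      (auto simp: cinner_add_right cinner_scaleC_right Re_cinner_self intro: cinner_commute)
  then show "(cmod (cinner x y))\<^sup>2 \<le> (norm x * norm y)\<^sup>2"
    by (simp add: Re_cinner_self power_mult_distrib)
qed simp

lemma bounded_linear_cinner_right: "bounded_linear (cinner (a::'a::complex_inner_space))"
  using norm_cinner_le[of a]
  by (intro bounded_linear_intro[where K = "norm a"])
    (auto simp: cinner_add_right cinner_scaleR_right mult.commute)

lemma bounded_linear_cinner_left: "bounded_linear (\<lambda>x. cinner x (a::'a::complex_inner_space))"
  by (rule bounded_linear_intro[where K = "norm a"])
    (auto simp: cinner_add_left cinner_scaleR_left norm_cinner_le)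

lemmas tendsto_cinner_right = bounded_linear.tendsto[OF bounded_linear_cinner_right]
lemmas cinner_diff_right = linear_diff[OF bounded_linear.linear[OF bounded_linear_cinner_right]]
lemmas cinner_diff_left = linear_diff[OF bounded_linear.linear[OF bounded_linear_cinner_left]]
lemmas cinner_minus_right = linear_neg[OF bounded_linear.linear[OF bounded_linear_cinner_right]]

lemma norm_diff_sq:
  "(norm (x - y))\<^sup>2 = (norm x)\<^sup>2 + (norm y)\<^sup>2 - 2 * Re (cinner x (y::'a::complex_inner_space))"
  using cinner_commute[of y x]
  by (simp add: Re_cinner_self[symmetric] cinner_diff_right cinner_diff_left)

lemma parallelogram_law:
  "(norm (x + y))\<^sup>2 + (norm (x - y))\<^sup>2 = 2 * (norm x)\<^sup>2 + 2 * (norm (y::'a::complex_inner_space))\<^sup>2"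
  using norm_diff_sq[of x "- y"] norm_diff_sq[of x y] by (simp add: cinner_minus_right)

lemma Cauchy_if_dist_le_add:
  fixes z :: "nat \<Rightarrow> 'a::metric_space"
  assumes dist_le: "\<And>m n. dist (z m) (z n) \<le> a m + a n" and "a \<longlonglongrightarrow> 0"
  shows "Cauchy z"
proof (rule metric_CauchyI)
  fix e :: real assume "0 < e"
  then obtain M where M: "\<forall>n\<ge>M. norm (a n - 0) < e / 2"
    using LIMSEQ_D[OF \<open>a \<longlonglongrightarrow> 0\<close> half_gt_zero] by blast
  have "dist (z m) (z n) < e" if "M \<le> m" "M \<le> n" for m n
  proof -
    have "a m < e / 2" "a n < e / 2" using M that by (auto simp: abs_less_iff)
    then show ?thesis using dist_le[of m n] by linarith
  qed
  then show "\<exists>M. \<forall>m\<ge>M. \<forall>n\<ge>M. dist (z m) (z n) < e" by blast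
qed

lemma Cauchy_if_dist_dominated:
  fixes u :: "nat \<Rightarrow> 'a::metric_space" and v :: "nat \<Rightarrow> 'b::metric_space"
  assumes "Cauchy u" and dist_le: "\<And>m n. dist (v m) (v n) \<le> c * dist (u m) (u n)"
  shows "Cauchy v"
proof (rule metric_CauchyI)
  fix e :: real assume "0 < e"
  define c' where "c' = \<bar>c\<bar> + 1"
  have "0 < c'" by (simp add: c'_def add_nonneg_pos)
  then obtain M where M: "\<And>m n. M \<le> m \<Longrightarrow> M \<le> n \<Longrightarrow> dist (u m) (u n) < e / c'"
    using metric_CauchyD[OF \<open>Cauchy u\<close>, of "e / c'"] \<open>0 < e\<close> by auto
  have "dist (v m) (v n) < e" if "M \<le> m" "M \<le> n" for m n
  proof -
    have "c \<le> c'" using abs_ge_self[of c] by (simp add: c'_def)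
    then have "dist (v m) (v n) \<le> c' * dist (u m) (u n)"
      using dist_le[of m n] mult_right_mono[OF _ zero_le_dist] order_trans by blast
    also have "\<dots> < e"
      using M[OF that] \<open>0 < c'\<close> by (simp add: pos_less_divide_eq mult.commute)
    finally show ?thesis .
  qed
  then show "\<exists>M. \<forall>m\<ge>M. \<forall>n\<ge>M. dist (v m) (v n) < e" by blast
qed

lemma best_approximation_in_closure:
  fixes V :: "'a::{complex_inner_space,complete_space} set"
  assumes "V \<noteq> {}"
    and add: "\<And>u v. u \<in> V \<Longrightarrow> v \<in> V \<Longrightarrow> u + v \<in> V"
    and scale: "\<And>r u. u \<in> V \<Longrightarrow> scaleR r u \<in> V"
  shows "\<exists>v\<in>closure V. \<forall>u\<in>V. norm (x - v) \<le> norm (x - v - u)"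
proof -
  define d where "d = (INF u\<in>V. (norm (x - u))\<^sup>2)"
  have bdd: "bdd_below ((\<lambda>u. (norm (x - u))\<^sup>2) ` V)" by (rule bdd_belowI2[of _ 0]) simp
  have d_le: "d \<le> (norm (x - u))\<^sup>2" if "u \<in> V" for u
    unfolding d_def using bdd that by (rule cINF_lower)
  have "\<exists>u\<in>V. (norm (x - u))\<^sup>2 < d + 1 / Suc n" for n
  proof -
    have "d < d + 1 / Suc n" by simp
    then show ?thesis using cINF_less_iff[OF \<open>V \<noteq> {}\<close> bdd] unfolding d_def by blast
  qed
  then obtain z where z_in: "\<And>n. z n \<in> V"
    and z_near: "\<And>n. (norm (x - z n))\<^sup>2 < d + 1 / Suc n" by metis
  have "dist (z m) (z n) \<le> sqrt (2 / Suc m) + sqrt (2 / Suc n)" for m n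
  proof -
    have "4 * d \<le> 4 * (norm (x - scaleR (1/2) (z m + z n)))\<^sup>2"
      using d_le add scale z_in by simp
    also have "\<dots> = (norm (scaleR 2 (x - scaleR (1/2) (z m + z n))))\<^sup>2"
      by (simp add: power_mult_distrib)
    also have "scaleR 2 (x - scaleR (1/2) (z m + z n)) = (x - z m) + (x - z n)"
      by (simp add: scaleR_right_diff_distrib scaleR_2)
    finally have "(norm (z m - z n))\<^sup>2 \<le> 2 / Suc m + 2 / Suc n"
      using parallelogram_law[of "x - z m" "x - z n"] z_near[of m] z_near[of n]
      by (simp add: norm_minus_commute)
    then have "dist (z m) (z n) \<le> sqrt (2 / Suc m + 2 / Suc n)"
      by (simp add: dist_norm real_le_rsqrt)
    also have "\<dots> \<le> sqrt (2 / Suc m) + sqrt (2 / Suc n)" by (simp add: sqrt_add_le_add_sqrt)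
    finally show ?thesis .
  qed
  moreover have "(\<lambda>n. sqrt (2 / real (Suc n))) \<longlonglongrightarrow> 0"
    using tendsto_real_sqrt[OF LIMSEQ_Suc[OF lim_const_over_n[of "2::real"]]] by simp
  ultimately have "Cauchy z" by (rule Cauchy_if_dist_le_add)
  then obtain v where v: "z \<longlonglongrightarrow> v" using Cauchy_convergent_iff convergent_def by blast
  have dist_lim: "(\<lambda>n. (norm (x - z n - u))\<^sup>2) \<longlonglongrightarrow> (norm (x - v - u))\<^sup>2" for u
    by (intro tendsto_intros v)
  have "(norm (x - v))\<^sup>2 \<le> d"
  proof (rule tendsto_le[OF trivial_limit_sequentially])
    show "(\<lambda>n. d + 1 / Suc n) \<longlonglongrightarrow> d"
      using tendsto_add[OF tendsto_const LIMSEQ_Suc[OF lim_const_over_n[of "1::real"]]] by simp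
    show "(\<lambda>n. (norm (x - z n - 0))\<^sup>2) \<longlonglongrightarrow> (norm (x - v))\<^sup>2"
      using dist_lim[of 0] by simp
    show "\<forall>\<^sub>F n in sequentially. (norm (x - z n - 0))\<^sup>2 \<le> d + 1 / Suc n"
      using z_near by (simp add: less_imp_le)
  qed
  moreover have "d \<le> (norm (x - v - u))\<^sup>2" if "u \<in> V" for u
  proof (rule tendsto_le[OF trivial_limit_sequentially dist_lim tendsto_const])
    show "\<forall>\<^sub>F n in sequentially. d \<le> (norm (x - z n - u))\<^sup>2"
      using d_le[OF add[OF z_in that]] by (simp add: diff_diff_eq)
  qed
  ultimately have "\<forall>u\<in>V. norm (x - v) \<le> norm (x - v - u)"
    using order_trans power2_le_imp_le norm_ge_zero by metis
  moreover have "v \<in> closure V" using closure_sequential z_in v by blast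
  ultimately show ?thesis by blast
qed

lemma Re_cinner_eq_0_if_norm_le:
  assumes "\<And>t::real. norm e \<le> norm (e - scaleR t u)"
  shows "Re (cinner (e::'a::complex_inner_space) u) = 0"
proof -
  define c where "c = Re (cinner e u)"
  define K where "K = (norm u)\<^sup>2"
  have "(norm e)\<^sup>2 \<le> (norm (e - scaleR t u))\<^sup>2" for t
    using assms by (simp add: power_mono)
  then have quadratic: "0 \<le> t\<^sup>2 * K - 2 * t * c" for t
    by (simp add: norm_diff_sq cinner_scaleR_right power_mult_distrib c_def K_def mult.assoc)
  define s where "s = K + 1"
  have "K \<ge> 0" "s > 0" "K = s - 1" by (simp_all add: K_def s_def add_nonneg_pos)
  have "0 \<le> ((c / s)\<^sup>2 * K - 2 * (c / s) * c) * s\<^sup>2"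
    by (intro mult_nonneg_nonneg quadratic) simp
  also have "\<dots> = - c\<^sup>2 * (s + 1)"
    unfolding \<open>K = s - 1\<close> using \<open>s > 0\<close> by (simp add: field_simps power2_eq_square)
  finally show ?thesis
    using \<open>s > 0\<close> by (simp add: c_def mult_le_0_iff)
qed

locale positive_operator =
  fixes T :: "'a::{complex_inner_space,complete_space} \<Rightarrow> 'a"
  assumes bounded_linear: "bounded_linear T"
    and scaleC: "T (scaleC s x) = scaleC s (T x)"
    and symmetric: "cinner x (T y) = cinner (T x) y"
    and nonneg: "0 \<le> Re (cinner x (T x))"
begin

sublocale bounded_linear T by (rule bounded_linear)

lemma Cauchy_Schwarz: "(cmod (cinner x (T y)))\<^sup>2 \<le> Re (cinner x (T x)) * Re (cinner y (T y))"
proof (rule hermitian_form_Cauchy_Schwarz)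
  show "cinner x (T y) = cnj (cinner y (T x))" for x y
    using cinner_commute[of x "T y"] symmetric[of y x] by simp
qed (simp_all add: add scaleC cinner_add_right cinner_scaleC_right nonneg)

lemma closure_range_eq_UNIV:
  assumes inj: "\<And>x. T x = 0 \<Longrightarrow> x = 0"
  shows "closure (range T) = UNIV"
proof -
  have "x \<in> closure (range T)" for x
  proof -
    have "range T \<noteq> {}" "\<And>u v. u \<in> range T \<Longrightarrow> v \<in> range T \<Longrightarrow> u + v \<in> range T"
      "\<And>r u. u \<in> range T \<Longrightarrow> scaleR r u \<in> range T"
      by (auto simp flip: add scaleR)
    then obtain v where v: "v \<in> closure (range T)"
      and best: "\<And>u. u \<in> range T \<Longrightarrow> norm (x - v) \<le> norm (x - v - u)"
      using best_approximation_in_closure[of "range T" x] by blast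
    define e where "e = x - v"
    have "Re (cinner e (T e)) = 0"
      by (rule Re_cinner_eq_0_if_norm_le) (use best in \<open>simp add: e_def flip: scaleR\<close>)
    then have "(cmod (cinner (T e) (T e)))\<^sup>2 \<le> 0"
      using Cauchy_Schwarz[of "T e" e] by simp
    then have "T e = 0" by (simp add: cinner_self)
    then have "e = 0" by (rule inj)
    then show ?thesis using v by (simp add: e_def)
  qed
  then show ?thesis by blast
qed

context
  fixes b :: real
  assumes "0 \<le> b" and form_le: "\<And>x. Re (cinner x (T x)) \<le> b * (norm (T x))\<^sup>2"
begin

lemma norm_le_on_range: "norm (T z) \<le> b * norm (T (T z))"
proof (cases "T z = 0")
  case False
  let ?u = "T z"
  have "(norm ?u)\<^sup>2 * (norm ?u)\<^sup>2 = (cmod (cinner ?u (T z)))\<^sup>2"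
    by (simp add: cinner_self power2_eq_square norm_mult)
  also have "\<dots> \<le> Re (cinner ?u (T ?u)) * Re (cinner z (T z))" by (rule Cauchy_Schwarz)
  also have "\<dots> \<le> Re (cinner ?u (T ?u)) * (b * (norm ?u)\<^sup>2)"
    by (rule mult_left_mono[OF form_le nonneg])
  finally have "(norm ?u)\<^sup>2 * (norm ?u)\<^sup>2 \<le> (norm ?u)\<^sup>2 * (b * Re (cinner ?u (T ?u)))"
    by (simp add: algebra_simps)
  then have "(norm ?u)\<^sup>2 \<le> b * Re (cinner ?u (T ?u))"
    by (rule mult_left_le_imp_le) (use False in simp)
  also have "\<dots> \<le> b * (norm ?u * norm (T ?u))"
    using norm_cinner_le[of ?u "T ?u"] complex_Re_le_cmod[of "cinner ?u (T ?u)"] \<open>0 \<le> b\<close>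
    by (simp add: mult_left_mono)
  finally show ?thesis
    using False by (simp add: power2_eq_square mult.left_commute mult_le_cancel_left_pos)
qed simp

lemma norm_le_norm_image:
  assumes "\<And>x. T x = 0 \<Longrightarrow> x = 0"
  shows "norm x \<le> b * norm (T x)"
proof -
  have "continuous_on UNIV T" by (rule linear_continuous_on[OF bounded_linear])
  then have "closed {x. norm x \<le> b * norm (T x)}"
    by (intro closed_Collect_le continuous_intros)
  moreover have "range T \<subseteq> {x. norm x \<le> b * norm (T x)}"
    using norm_le_on_range by auto
  ultimately have "closure (range T) \<subseteq> {x. norm x \<le> b * norm (T x)}"
    by (rule closure_minimal[rotated])
  then show ?thesis using closure_range_eq_UNIV[OF assms] by blast
qed

lemma surj_if_inj:
  assumes "\<And>x. T x = 0 \<Longrightarrow> x = 0"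
  shows "surj T"
proof -
  have "h \<in> range T" for h
  proof -
    obtain y where "\<And>n. y n \<in> range T" and "y \<longlonglongrightarrow> h"
      using closure_sequential closure_range_eq_UNIV[OF assms] by blast
    moreover have "\<forall>n. \<exists>w. y n = T w" using \<open>\<And>n. y n \<in> range T\<close> by blast
    then obtain z where "\<And>n. y n = T (z n)" by metis
    then have "y = (\<lambda>n. T (z n))" by (rule ext)
    ultimately have z: "(\<lambda>n. T (z n)) \<longlonglongrightarrow> h" by simp
    have "Cauchy z"
      by (rule Cauchy_if_dist_dominated[OF LIMSEQ_imp_Cauchy[OF z], of _ b])
        (use norm_le_norm_image[OF assms] in \<open>simp add: dist_norm flip: diff\<close>)
    then obtain w where "z \<longlonglongrightarrow> w" using Cauchy_convergent_iff convergent_def by blast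
    then have "(\<lambda>n. T (z n)) \<longlonglongrightarrow> T w" by (rule tendsto)
    then have "T w = h" using z LIMSEQ_unique by blast
    then show ?thesis by blast
  qed
  then show ?thesis by blast
qed

end

end

lemma linear_on_diff:
  assumes "linear_on D W" "x \<in> D" "y \<in> D"
  shows "x - y \<in> D" "W (x - y) = W x - W y"
proof -
  have minus: "scaleC (-1) z = - z" for z :: 'a
    using scaleC_of_real[of "-1" z] by simp
  have "scaleC (-1) y \<in> D" "W (scaleC (-1) y) = scaleC (-1) (W y)"
    using assms(1,3) unfolding linear_on_def csubspace_def by simp_all
  then have "- y \<in> D" "W (- y) = - W y" by (simp_all only: minus)
  then show "x - y \<in> D" "W (x - y) = W x - W y"
    using assms unfolding linear_on_def csubspace_def
    by (simp_all add: diff_conv_add_uminus del: add_uminus_conv_diff)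
qed

lemma dom_eq_UNIV_if_bounded_op:
  fixes D :: "'a::{complex_inner_space,complete_space} set"
  assumes "self_adjoint_op D W" and "bounded_op D W"
  shows "D = UNIV"
proof -
  have lin: "linear_on D W" and dense: "closure D = UNIV"
    and symmetric: "\<And>f g. f \<in> D \<Longrightarrow> g \<in> D \<Longrightarrow> cinner (W f) g = cinner f (W g)"
    and adjoint: "\<And>g h. \<forall>f\<in>D. cinner (W f) g = cinner f h \<Longrightarrow> g \<in> D"
    using assms(1) unfolding self_adjoint_op_def by blast+
  obtain C where C: "\<And>f. f \<in> D \<Longrightarrow> norm (W f) \<le> C * norm f"
    using assms(2) unfolding bounded_op_def by blast
  have "g \<in> D" for g
  proof -
    obtain f where f: "\<And>n. f n \<in> D" and "f \<longlonglongrightarrow> g"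
      using closure_sequential dense by blast
    have "Cauchy (\<lambda>n. W (f n))"
    proof (rule Cauchy_if_dist_dominated[OF LIMSEQ_imp_Cauchy[OF \<open>f \<longlonglongrightarrow> g\<close>]])
      show "dist (W (f m)) (W (f n)) \<le> C * dist (f m) (f n)" for m n
        using C[OF linear_on_diff(1)[OF lin f[of m] f[of n]]]
          linear_on_diff(2)[OF lin f[of m] f[of n]]
        by (simp add: dist_norm)
    qed
    then obtain h where "(\<lambda>n. W (f n)) \<longlonglongrightarrow> h"
      using Cauchy_convergent_iff convergent_def by blast
    \<comment> \<open>the pair (g, h) lies in the graph of the adjoint, hence in that of W\<close>
    have "cinner (W u) g = cinner u h" if "u \<in> D" for u
    proof (rule LIMSEQ_unique)
      show "(\<lambda>n. cinner (W u) (f n)) \<longlonglongrightarrow> cinner (W u) g"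
        by (rule tendsto_cinner_right) fact
      show "(\<lambda>n. cinner (W u) (f n)) \<longlonglongrightarrow> cinner u h"
        using tendsto_cinner_right[OF \<open>(\<lambda>n. W (f n)) \<longlonglongrightarrow> h\<close>, of u] symmetric[OF that f]
        by simp
    qed
    then show "g \<in> D" using adjoint by blast
  qed
  then show ?thesis by blast
qed

lemma polar_symmetry_norm:
  assumes "polar_symmetry D W J"
  shows "norm (J x) = norm x"
proof -
  have "(norm (J x))\<^sup>2 = (norm x)\<^sup>2"
    using assms unfolding polar_symmetry_def by (simp flip: Re_cinner_self)
  then show ?thesis by (simp add: power2_eq_iff_nonneg)
qed

lemma hilbert_krein_frame_norm_equivalence:
  assumes "hilbert_frame fs" and "krein_frame D W J fs"
  obtains a c where "0 < a" "0 < c"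
    and "\<And>k. k \<in> D \<Longrightarrow> (norm (W k))\<^sup>2 \<le> a * Re (cinner k (J (W k)))"
    and "\<And>k. k \<in> D \<Longrightarrow> Re (cinner k (J (W k))) \<le> c * (norm (W k))\<^sup>2"
proof -
  obtain AH BH where H: "0 < AH" "AH \<le> BH"
    "\<And>f. AH * (norm f)\<^sup>2 \<le> (\<Sum>n. (cmod (cinner (fs n) f))\<^sup>2)"
    "\<And>f. (\<Sum>n. (cmod (cinner (fs n) f))\<^sup>2) \<le> BH * (norm f)\<^sup>2"
    using assms(1) unfolding hilbert_frame_def by blast
  obtain AK BK where K: "0 < AK" "AK \<le> BK"
    "\<And>k. k \<in> D \<Longrightarrow> AK * Re (cinner k (J (W k))) \<le> (\<Sum>n. (cmod (cinner (fs n) (W k)))\<^sup>2)"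
    "\<And>k. k \<in> D \<Longrightarrow> (\<Sum>n. (cmod (cinner (fs n) (W k)))\<^sup>2) \<le> BK * Re (cinner k (J (W k)))"
    using assms(2) unfolding krein_frame_def by blast
  show ?thesis
  proof (rule that)
    show "0 < BK / AH" "0 < BH / AK" using H K by simp_all
    show "(norm (W k))\<^sup>2 \<le> BK / AH * Re (cinner k (J (W k)))" if "k \<in> D" for k
      using order_trans[OF H(3) K(4)[OF that]] \<open>0 < AH\<close> by (simp add: field_simps)
    show "Re (cinner k (J (W k))) \<le> BH / AK * (norm (W k))\<^sup>2" if "k \<in> D" for k
      using order_trans[OF K(3)[OF that] H(4)] \<open>0 < AK\<close> by (simp add: field_simps)
  qed
qed

lemma bounded_op_if_norm_sq_le:
  assumes J_norm: "\<And>x. norm (J x) = norm x" and "0 < a"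
    and le: "\<And>k. k \<in> D \<Longrightarrow> (norm (W k))\<^sup>2 \<le> a * Re (cinner k (J (W k)))"
  shows "bounded_op D W"
  unfolding bounded_op_def
proof (intro exI ballI)
  fix k assume "k \<in> D"
  show "norm (W k) \<le> a * norm k"
  proof (cases "W k = 0")
    case False
    have "norm (W k) * norm (W k) \<le> a * Re (cinner k (J (W k)))"
      using le[OF \<open>k \<in> D\<close>] by (simp add: power2_eq_square)
    also have "\<dots> \<le> a * (norm k * norm (W k))"
      using norm_cinner_le[of k "J (W k)"] complex_Re_le_cmod[of "cinner k (J (W k))"] \<open>0 < a\<close>
      by (simp add: J_norm)
    also have "\<dots> = norm (W k) * (a * norm k)" by (simp add: ac_simps)
    finally show ?thesis
      by (rule mult_left_le_imp_le) (use False in simp)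
  qed (use \<open>0 < a\<close> in simp)
qed

lemma positive_operator_polar:
  fixes W J :: "'a::{complex_inner_space,complete_space} \<Rightarrow> 'a"
  assumes "self_adjoint_op UNIV W" and "bounded_op UNIV W" and "polar_symmetry UNIV W J"
  shows "positive_operator (\<lambda>x. J (W x))"
proof (rule positive_operator.intro)
  have W_lin: "linear_on UNIV W" and W_sym: "\<And>f g. cinner (W f) g = cinner f (W g)"
    using assms(1) unfolding self_adjoint_op_def by blast+
  have J_lin: "linear_on UNIV J" and J_sym: "\<And>x y. cinner (J x) y = cinner x (J y)"
    and J_W: "\<And>f. J (W f) = W (J f)"
    using assms(3) unfolding polar_symmetry_def by blast+
  obtain C where "\<And>f. norm (W f) \<le> C * norm f"
    using assms(2) unfolding bounded_op_def by blast
  then show "bounded_linear (\<lambda>x. J (W x))"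
    using W_lin J_lin polar_symmetry_norm[OF assms(3)]
    by (intro bounded_linear_intro[where K = C])
      (auto simp: linear_on_def mult.commute simp flip: scaleC_of_real)
  show "J (W (scaleC s x)) = scaleC s (J (W x))" for s x
    using W_lin J_lin by (simp add: linear_on_def)
  show "cinner x (J (W y)) = cinner (J (W x)) y" for x y
    by (simp add: J_sym W_sym flip: J_W)
  show "0 \<le> Re (cinner x (J (W x)))" for x
    using assms(3) unfolding polar_symmetry_def by blast
qed

lemma zero_notin_op_spectrum_if_bounded_below:
  assumes "linear_on UNIV W" and "surj W" and inj: "\<And>f. W f = 0 \<Longrightarrow> f = 0"
    and below: "\<And>x. norm x \<le> c * norm (W x)"
  shows "0 \<notin> op_spectrum UNIV W"
proof -
  have "inj W"
  proof (rule injI)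
    fix x y assume "W x = W y"
    then have "W (x - y) = 0" using linear_on_diff(2)[OF \<open>linear_on UNIV W\<close>] by simp
    then show "x = y" using inj[of "x - y"] by simp
  qed
  then have "W (inv W h) = h" "inv W (W f) = f" "norm (inv W h) \<le> c * norm h" for h f
    using \<open>surj W\<close> below[of "inv W h"] by (simp_all add: surj_f_inv_f)
  then show ?thesis
    unfolding op_spectrum_def by (auto simp: scaleC_zero_left)
qed

lemma zero_notin_op_spectrum:
  fixes W J :: "'a::{complex_inner_space,complete_space} \<Rightarrow> 'a"
  assumes "self_adjoint_op UNIV W" and inj: "\<And>f. W f = 0 \<Longrightarrow> f = 0"
    and "bounded_op UNIV W" and J: "polar_symmetry UNIV W J"
    and "0 \<le> c" and le: "\<And>k. Re (cinner k (J (W k))) \<le> c * (norm (W k))\<^sup>2"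
  shows "0 \<notin> op_spectrum UNIV W"
proof -
  interpret T: positive_operator "\<lambda>x. J (W x)"
    using positive_operator_polar[OF assms(1,3) J] .
  have J_J: "J (J x) = x" and J_norm: "norm (J x) = norm x" for x
    using J polar_symmetry_norm[OF J] unfolding polar_symmetry_def by blast+
  have J_0: "J 0 = 0" using J_J[of 0] J_norm[of "J 0"] by simp
  have T_inj: "x = 0" if "J (W x) = 0" for x
  proof (rule inj)
    show "W x = 0" using J_J[of "W x"] that J_0 by simp
  qed
  have T_le: "Re (cinner x (J (W x))) \<le> c * (norm (J (W x)))\<^sup>2" for x
    using le by (simp add: J_norm)
  show ?thesis
  proof (rule zero_notin_op_spectrum_if_bounded_below)
    show "linear_on UNIV W" using assms(1) unfolding self_adjoint_op_def by blast
    have "W y = h" if "J (W y) = J h" for y h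
      using arg_cong[OF that, of J] by (simp add: J_J)
    then show "surj W"
      using T.surj_if_inj[OF \<open>0 \<le> c\<close> T_le T_inj] by (metis surjD surjI)
    show "norm x \<le> c * norm (W x)" for x
      using T.norm_le_norm_image[OF \<open>0 \<le> c\<close> T_le T_inj, of x] by (simp add: J_norm)
  qed (rule inj)
qed

theorem proposition4p1:
  fixes D :: "'a::{complex_inner_space, complete_space} set"
    and W J :: "'a \<Rightarrow> 'a"
  assumes "separable_space (euclidean :: 'a topology)"
    and "self_adjoint_op D W"
    and "\<forall>f\<in>D. W f = 0 \<longrightarrow> f = 0"
    and "polar_symmetry D W J"
  shows "(bounded_op D W \<and> 0 \<in> op_spectrum D W \<longrightarrow>
            (\<forall>fs. hilbert_frame fs \<longrightarrow> \<not> krein_frame D W J fs))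
       \<and> (\<not> bounded_op D W \<longrightarrow>
            (\<forall>fs. range fs \<subseteq> D \<and> hilbert_frame fs \<longrightarrow> \<not> krein_frame D W J fs))"
proof (intro conjI impI allI notI)
  fix fs assume "bounded_op D W \<and> 0 \<in> op_spectrum D W" "hilbert_frame fs" "krein_frame D W J fs"
  then obtain c where "0 < c" and "\<And>k. k \<in> D \<Longrightarrow> Re (cinner k (J (W k))) \<le> c * (norm (W k))\<^sup>2"
    by (metis hilbert_krein_frame_norm_equivalence)
  moreover have "D = UNIV" using dom_eq_UNIV_if_bounded_op assms(2) \<open>bounded_op D W \<and> _\<close> by blast
  ultimately show False
    using zero_notin_op_spectrum[of W J c] assms(2-4) \<open>bounded_op D W \<and> _\<close> by auto
next
  fix fs assume "\<not> bounded_op D W" "range fs \<subseteq> D \<and> hilbert_frame fs" "krein_frame D W J fs"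
  then obtain a where "0 < a" and "\<And>k. k \<in> D \<Longrightarrow> (norm (W k))\<^sup>2 \<le> a * Re (cinner k (J (W k)))"
    by (metis hilbert_krein_frame_norm_equivalence)
  then have "bounded_op D W" by (rule bounded_op_if_norm_sq_le[OF polar_symmetry_norm[OF assms(4)]])
  with \<open>\<not> bounded_op D W\<close> show False ..
qed

end
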